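(* Let $n$ be a parameter and let $p=p(n)$ be a positive integer with $p=O(2^{n^k})$ for some constant $k$. Then for any polynomial $s(n)$ there is a polynomial $t(n)$ such that whenever $q$ is an integer with $q\geq t(n)\,p$, for the superpositions $\boldsymbol\beta=\mathrm{FT}_p(\boldsymbol\alpha)$ and $\boldsymbol\gamma=\mathrm{FT}_q(\boldsymbol\alpha)$ of an input superposition $\boldsymbol\alpha$ we have $$\|\mathcal D_{\boldsymbol\beta}-\mathcal D_{\boldsymbol\gamma}\|_1=\sum_{i=0}^{p-1}\left|\mathcal D_{\boldsymbol\beta}(i)-\mathcal D_{\boldsymbol\gamma}(i)\right|\leq \frac{1}{s(n)}.$$
   Context: Write $[p]=\{0,1,\dots,p-1\}$ and $\omega_N=e^{2\pi i/N}$. An input superposition is a unit vector $\boldsymbol\alpha=\sum_{i=0}^{p-1}\alpha_i|i\rangle\in\mathbb C^p$. For an integer $N\ge p$, the Fourier transform over $\mathbb Z_N$ of $\boldsymbol\alpha$ (viewed as a vector in $\mathbb C^N$ with zero entries at indices $\ge p$) is $\mathrm{FT}_N(\boldsymbol\alpha)=\sum_{c=0}^{N-1}\left(\frac{1}{\sqrt N}\sum_{i=0}^{p-1}\omega_N^{ic}\alpha_i\right)|c\rangle$. Write $\boldsymbol\beta=\sum_{i=0}^{p-1}\beta_i|i\rangle$ and $\boldsymbol\gamma=\sum_{i=0}^{q-1}\gamma_i|i\rangle$ with $q>p$. For $i\in[p]$ let $i'=\lfloor \frac{q}{p}i\rfloor$. Define the distributions on $[p]$: $\mathcal D_{\boldsymbol\beta}(i)=|\beta_i|^2$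 and $\mathcal D_{\boldsymbol\gamma}(i)=\frac{|\gamma_{i'}|^2}{\sum_{l\in[p]}|\gamma_{l'}|^2}$ (the distribution of $i$ obtained by measuring $\boldsymbol\gamma$ and conditioning on the outcome being of the form $i'$). *)

theory Defs
  imports "HOL-Analysis.Analysis" "HOL-Computational_Algebra.Polynomial" "HOL-Library.Landau_Symbols"
begin

definition omega :: "nat \<Rightarrow> complex" where
  "omega N = exp (2 * of_real pi * \<i> / of_nat N)"

text \<open>Fourier transform over Z_N of a superposition alpha on [p] (zero-padded),
  coefficient at basis state c.\<close>
definition FT :: "nat \<Rightarrow> nat \<Rightarrow> (nat \<Rightarrow> complex) \<Rightarrow> nat \<Rightarrow> complex" where
  "FT N p \<alpha> c = (1 / of_real (sqrt (real N))) * (\<Sum>i<p. omega N ^ (i * c) * \<alpha> i)"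

definition unit_superposition :: "nat \<Rightarrow> (nat \<Rightarrow> complex) \<Rightarrow> bool" where
  "unit_superposition p \<alpha> \<longleftrightarrow> (\<Sum>i<p. (cmod (\<alpha> i))\<^sup>2) = 1"

definition idx' :: "nat \<Rightarrow> nat \<Rightarrow> nat \<Rightarrow> nat" where
  "idx' p q i = nat \<lfloor>real q / real p * real i\<rfloor>"

definition D_beta :: "nat \<Rightarrow> (nat \<Rightarrow> complex) \<Rightarrow> nat \<Rightarrow> real" where
  "D_beta p \<beta> i = (cmod (\<beta> i))\<^sup>2"

definition D_gamma :: "nat \<Rightarrow> nat \<Rightarrow> (nat \<Rightarrow> complex) \<Rightarrow> nat \<Rightarrow> real" where
  "D_gamma p q \<gamma> i = (cmod (\<gamma> (idx' p q i)))\<^sup>2 / (\<Sum>l<p. (cmod (\<gamma> (idx' p q l)))\<^sup>2)"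

end

theory Submission
  imports Defs "HOL-Probability.Characteristic_Functions"
begin

(* Both transforms are samples of the single transform G = FT_{pq}(alpha): beta_i = sqrt q * G(iq)
   and gamma_c = sqrt p * G(cp), so gamma_{i'} is G sampled at i'p, less than p steps below iq.
   Consecutive values of G differ by the transform of (omega^j - 1) alpha_j, so by Parseval the
   squared increments of G sum to at most (2 pi p / pq)^2.  Telescoping over the disjoint windows
   [i'p, iq) with Cauchy-Schwarz gives ||beta - sqrt(q/p) gamma'||^2 <= 4 pi^2 p / q.  Squaring the
   amplitudes and renormalising costs a constant factor. *)

lemma omega_pow: "omega N ^ j = cis (2 * pi * j / N)"
proof -
  have "omega N ^ j = exp (of_nat j * (2 * of_real pi * \<i> / of_nat N))"
    unfolding omega_def by (simp only: exp_of_nat_mult)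
  also have "\<dots> = exp (\<i> * complex_of_real (2 * pi * j / N))"
    by (simp add: mult_ac)
  finally show ?thesis by (simp add: cis_conv_exp)
qed

lemma omega_pow_mult_self: "0 < m \<Longrightarrow> omega (N * m) ^ m = omega N"
  using omega_pow[of "N * m" m] omega_pow[of N 1] by simp

lemma norm_omega_pow_minus_one_le: "norm (omega N ^ j - 1) \<le> 2 * pi * j / N"
  using iexp_approx1[of "2 * pi * j / N" 0] by (simp add: omega_pow cis_conv_exp)

lemma sum_omega_pow_orthogonal:
  assumes "j < N" "l < N"
  shows "(\<Sum>k<N. omega N ^ (j * k) * cnj (omega N ^ (l * k))) = (if j = l then of_nat N else 0)"
proof -
  define x where "x = 2 * pi * (real j - real l) / N"
  have term_eq: "omega N ^ (j * k) * cnj (omega N ^ (l * k)) = cis x ^ k" for k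
  proof -
    have "2 * pi * real (j * k) / N - 2 * pi * real (l * k) / N = real k * x"
      by (simp add: x_def algebra_simps diff_divide_distrib)
    then show ?thesis
      by (simp only: omega_pow cis_cnj cis_mult Complex.DeMoivre diff_conv_add_uminus[symmetric])
  qed
  have "cis x ^ N = cis (2 * pi * (real j - real l))"
    using assms by (simp add: x_def Complex.DeMoivre)
  also have "\<dots> = 1"
    by (intro cis_multiple_2pi Ints_diff) auto
  finally have "cis x ^ N = 1" .
  moreover have "cis x \<noteq> 1" if "j \<noteq> l"
  proof
    assume "cis x = 1"
    then obtain n :: int where "x = n * 2 * pi"
      by (auto simp: complex_eq_iff cos_one_2pi_int)
    then have "2 * pi * (real j - real l) = 2 * pi * (n * N)"
      using assms by (simp add: x_def field_simps)
    then have "real j - real l = n * N"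
      by simp
    then have "int j - int l = n * int N"
      by (simp flip: of_int_eq_iff[where 'a = real])
    then have "\<bar>n * int N\<bar> < int N"
      using assms by linarith
    then have "n = 0"
      by (simp add: abs_mult mult_less_cancel_right2)
    then show False
      using \<open>int j - int l = n * int N\<close> that by simp
  qed
  ultimately show ?thesis
    unfolding term_eq by (cases "j = l") (simp_all add: x_def geometric_sum)
qed

lemma FT_eq_refine:
  assumes "0 < m"
  shows "FT N p \<alpha> c = of_real (sqrt m) * FT (N * m) p \<alpha> (c * m)"
proof -
  have "omega N ^ (i * c) = omega (N * m) ^ (i * (c * m))" for i
  proof -
    have "omega (N * m) ^ (i * (c * m)) = (omega (N * m) ^ m) ^ (i * c)"
      by (simp only: mult_ac flip: power_mult)
    then show ?thesis
      using omega_pow_mult_self[OF assms, of N] by simp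
  qed
  moreover have "1 / complex_of_real (sqrt N) = of_real (sqrt m) * (1 / of_real (sqrt (N * m)))"
    using assms by (cases "N = 0") (simp_all add: real_sqrt_mult)
  ultimately show ?thesis
    unfolding FT_def by simp
qed

lemma sum_norm_FT_sq:
  assumes "p \<le> N"
  shows "(\<Sum>c<N. (norm (FT N p \<alpha> c))\<^sup>2) = (\<Sum>i<p. (norm (\<alpha> i))\<^sup>2)"
proof -
  have "complex_of_real (\<Sum>c<N. (norm (\<Sum>i<p. omega N ^ (i * c) * \<alpha> i))\<^sup>2)
      = (\<Sum>c<N. \<Sum>i<p. \<Sum>l<p. \<alpha> i * cnj (\<alpha> l) * (omega N ^ (i * c) * cnj (omega N ^ (l * c))))"
    by (simp only: of_real_sum complex_norm_square cnj_sum sum_product) (simp add: mult_ac)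
  also have "\<dots> = (\<Sum>i<p. \<Sum>l<p. \<alpha> i * cnj (\<alpha> l) * (\<Sum>c<N. omega N ^ (i * c) * cnj (omega N ^ (l * c))))"
    by (simp only: sum_distrib_left sum.swap[of _ "{..<N}"])
  also have "\<dots> = (\<Sum>i<p. \<Sum>l<p. \<alpha> i * cnj (\<alpha> l) * (if i = l then of_nat N else 0))"
    using assms by (intro sum.cong refl, subst sum_omega_pow_orthogonal) auto
  also have "\<dots> = complex_of_real (real N * (\<Sum>i<p. (norm (\<alpha> i))\<^sup>2))"
    by (simp add: if_distrib sum_distrib_left mult_ac flip: complex_norm_square cong: if_cong)
  finally have "(\<Sum>c<N. (norm (\<Sum>i<p. omega N ^ (i * c) * \<alpha> i))\<^sup>2) = real N * (\<Sum>i<p. (norm (\<alpha> i))\<^sup>2)"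
    using of_real_eq_iff by blast
  then show ?thesis
    using assms by (cases "N = 0") (simp_all add: FT_def norm_divide power_divide flip: sum_divide_distrib)
qed

lemma FT_Suc_minus_FT:
  "FT N p \<alpha> (Suc c) - FT N p \<alpha> c = FT N p (\<lambda>i. (omega N ^ i - 1) * \<alpha> i) c"
  unfolding FT_def right_diff_distrib[symmetric] sum_subtractf[symmetric]
  by (simp add: power_add algebra_simps)

lemma sum_norm_FT_increment_sq_le:
  assumes "p \<le> N"
  shows "(\<Sum>c<N. (norm (FT N p \<alpha> (Suc c) - FT N p \<alpha> c))\<^sup>2)
           \<le> (2 * pi * p / N)\<^sup>2 * (\<Sum>i<p. (norm (\<alpha> i))\<^sup>2)"
proof -
  have "norm (omega N ^ i - 1) \<le> 2 * pi * p / N" if "i < p" for i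
  proof -
    have "2 * pi * i / N \<le> 2 * pi * p / N"
      using that by (intro divide_right_mono mult_left_mono) auto
    then show ?thesis
      using norm_omega_pow_minus_one_le[of N i] by linarith
  qed
  then have "(norm ((omega N ^ i - 1) * \<alpha> i))\<^sup>2 \<le> (2 * pi * p / N)\<^sup>2 * (norm (\<alpha> i))\<^sup>2" if "i < p" for i
    using that by (simp add: norm_mult power_mult_distrib mult_right_mono power_mono)
  then show ?thesis
    unfolding FT_Suc_minus_FT sum_norm_FT_sq[OF assms] sum_distrib_left by (intro sum_mono) simp
qed

lemma sum_norm_sq_telescoping_le:
  fixes F :: "nat \<Rightarrow> 'a::real_normed_vector" and a b :: "'i \<Rightarrow> nat"
  assumes "finite I"
    and ab: "\<And>i. i \<in> I \<Longrightarrow> a i \<le> b i \<and> b i \<le> a i + L \<and> b i \<le> N"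
    and disj: "disjoint_family_on (\<lambda>i. {a i..<b i}) I"
  shows "(\<Sum>i\<in>I. (norm (F (b i) - F (a i)))\<^sup>2) \<le> real L * (\<Sum>k<N. (norm (F (Suc k) - F k))\<^sup>2)"
proof -
  define d where "d k = norm (F (Suc k) - F k)" for k
  have "(norm (F (b i) - F (a i)))\<^sup>2 \<le> L * (\<Sum>k\<in>{a i..<b i}. (d k)\<^sup>2)" if "i \<in> I" for i
  proof -
    have "norm (F (b i) - F (a i)) \<le> (\<Sum>k\<in>{a i..<b i}. d k)"
      unfolding d_def sum_Suc_diff'[OF ab[OF that, THEN conjunct1], symmetric] by (rule norm_sum)
    then have "(norm (F (b i) - F (a i)))\<^sup>2 \<le> (\<Sum>k\<in>{a i..<b i}. d k)\<^sup>2"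
      by (simp add: power_mono)
    also have "\<dots> \<le> (\<Sum>k\<in>{a i..<b i}. (d k)\<^sup>2) * card {a i..<b i}"
      by (rule sum_squared_le_sum_of_squares)
    also have "\<dots> \<le> (\<Sum>k\<in>{a i..<b i}. (d k)\<^sup>2) * L"
      using ab[OF that] by (intro mult_left_mono sum_nonneg) auto
    finally show ?thesis
      by (simp add: mult.commute)
  qed
  then have "(\<Sum>i\<in>I. (norm (F (b i) - F (a i)))\<^sup>2) \<le> L * (\<Sum>i\<in>I. \<Sum>k\<in>{a i..<b i}. (d k)\<^sup>2)"
    by (simp add: sum_distrib_left sum_mono)
  also have "(\<Sum>i\<in>I. \<Sum>k\<in>{a i..<b i}. (d k)\<^sup>2) = (\<Sum>k\<in>(\<Union>i\<in>I. {a i..<b i}). (d k)\<^sup>2)"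
    using \<open>finite I\<close> disj by (intro sum.UNION_disjoint[symmetric]) (auto simp: disjoint_family_on_def)
  also have "\<dots> \<le> (\<Sum>k<N. (d k)\<^sup>2)"
    using ab by (intro sum_mono2) fastforce+
  finally show ?thesis
    unfolding d_def by (simp add: mult_left_mono)
qed

lemma sum_abs_diff_normalized_le:
  fixes x y :: "'i \<Rightarrow> real"
  assumes "finite A" and x1: "(\<Sum>i\<in>A. x i) = 1" and y0: "\<And>i. i \<in> A \<Longrightarrow> 0 \<le> y i"
  shows "(\<Sum>i\<in>A. \<bar>x i - y i / (\<Sum>l\<in>A. y l)\<bar>) \<le> 2 * (\<Sum>i\<in>A. \<bar>x i - y i\<bar>)"
proof -
  define Y where "Y = (\<Sum>l\<in>A. y l)"
  have "Y \<ge> 0"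
    unfolding Y_def using y0 by (simp add: sum_nonneg)
  have "\<bar>x i - y i / Y\<bar> \<le> \<bar>x i - y i\<bar> + y i * \<bar>1 - 1 / Y\<bar>" if "i \<in> A" for i
  proof -
    have "x i - y i / Y = (x i - y i) + y i * (1 - 1 / Y)"
      by (simp add: algebra_simps)
    also have "\<bar>\<dots>\<bar> \<le> \<bar>x i - y i\<bar> + \<bar>y i * (1 - 1 / Y)\<bar>"
      by (rule abs_triangle_ineq)
    finally show ?thesis
      using y0[OF that] by (simp add: abs_mult)
  qed
  then have "(\<Sum>i\<in>A. \<bar>x i - y i / Y\<bar>) \<le> (\<Sum>i\<in>A. \<bar>x i - y i\<bar> + y i * \<bar>1 - 1 / Y\<bar>)"
    by (rule sum_mono)
  also have "\<dots> = (\<Sum>i\<in>A. \<bar>x i - y i\<bar>) + Y * \<bar>1 - 1 / Y\<bar>"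
    by (simp add: Y_def sum.distrib sum_distrib_right)
  also have "Y * \<bar>1 - 1 / Y\<bar> \<le> \<bar>Y - 1\<bar>"
    using \<open>Y \<ge> 0\<close> by (cases "Y = 0") (simp_all add: abs_mult_pos[symmetric] field_simps)
  also have "\<bar>Y - 1\<bar> = \<bar>\<Sum>i\<in>A. y i - x i\<bar>"
    by (simp add: Y_def x1 sum_subtractf)
  also have "\<dots> \<le> (\<Sum>i\<in>A. \<bar>x i - y i\<bar>)"
    by (rule order_trans[OF sum_abs]) (simp add: abs_minus_commute)
  finally show ?thesis
    unfolding Y_def by simp
qed

lemma sum_abs_diff_normalized_le_2:
  fixes x y :: "'i \<Rightarrow> real"
  assumes "finite A" and x1: "(\<Sum>i\<in>A. x i) = 1"
    and x0: "\<And>i. i \<in> A \<Longrightarrow> 0 \<le> x i" and y0: "\<And>i. i \<in> A \<Longrightarrow> 0 \<le> y i"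
  shows "(\<Sum>i\<in>A. \<bar>x i - y i / (\<Sum>l\<in>A. y l)\<bar>) \<le> 2"
proof -
  have "(\<Sum>i\<in>A. \<bar>x i - y i / (\<Sum>l\<in>A. y l)\<bar>) \<le> (\<Sum>i\<in>A. x i + y i / (\<Sum>l\<in>A. y l))"
    using x0 y0 by (intro sum_mono) (simp add: abs_le_iff sum_nonneg)
  also have "\<dots> \<le> 2"
    using x1 by (cases "(\<Sum>l\<in>A. y l) = 0") (simp_all add: sum.distrib flip: sum_divide_distrib)
  finally show ?thesis .
qed

lemma sum_abs_diff_norm_sq_le:
  fixes b g :: "'i \<Rightarrow> 'a::real_normed_vector" and A :: "'i set"
  defines "E \<equiv> L2_set (\<lambda>i. norm (b i - g i)) A"
  shows "(\<Sum>i\<in>A. \<bar>(norm (b i))\<^sup>2 - (norm (g i))\<^sup>2\<bar>) \<le> E * (2 * L2_set (\<lambda>i. norm (b i)) A + E)"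
proof -
  have "\<bar>(norm (b i))\<^sup>2 - (norm (g i))\<^sup>2\<bar> \<le> \<bar>norm (b i - g i)\<bar> * \<bar>norm (b i) + norm (g i)\<bar>" for i
  proof -
    have "(norm (b i))\<^sup>2 - (norm (g i))\<^sup>2 = (norm (b i) - norm (g i)) * (norm (b i) + norm (g i))"
      by (simp add: power2_eq_square algebra_simps)
    then have "\<bar>(norm (b i))\<^sup>2 - (norm (g i))\<^sup>2\<bar> = \<bar>norm (b i) - norm (g i)\<bar> * (norm (b i) + norm (g i))"
      by (simp add: abs_mult)
    also have "\<dots> \<le> norm (b i - g i) * (norm (b i) + norm (g i))"
      by (intro mult_right_mono norm_triangle_ineq3) auto
    finally show ?thesis
      by simp
  qed
  then have "(\<Sum>i\<in>A. \<bar>(norm (b i))\<^sup>2 - (norm (g i))\<^sup>2\<bar>) \<le> E * L2_set (\<lambda>i. norm (b i) + norm (g i)) A"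
    unfolding E_def by (rule order_trans[OF sum_mono L2_set_mult_ineq])
  moreover have "L2_set (\<lambda>i. norm (b i) + norm (g i)) A \<le> 2 * L2_set (\<lambda>i. norm (b i)) A + E"
  proof -
    have "L2_set (\<lambda>i. norm (g i)) A \<le> L2_set (\<lambda>i. norm (b i) + norm (b i - g i)) A"
    proof (rule L2_set_mono)
      fix i
      show "norm (g i) \<le> norm (b i) + norm (b i - g i)"
        using norm_triangle_ineq2[of "g i" "b i"] by (simp add: norm_minus_commute)
    qed simp
    also have "\<dots> \<le> L2_set (\<lambda>i. norm (b i)) A + E"
      unfolding E_def by (rule L2_set_triangle_ineq)
    finally show ?thesis
      using L2_set_triangle_ineq[of "\<lambda>i. norm (b i)" "\<lambda>i. norm (g i)" A] by simp
  qed
  moreover have "0 \<le> E"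
    unfolding E_def by (rule L2_set_nonneg)
  ultimately show ?thesis
    by (meson mult_left_mono order_trans)
qed

lemma sum_abs_diff_normalized_norm_sq_le:
  fixes b g :: "'i \<Rightarrow> 'a::real_normed_vector"
  assumes "finite A" and b1: "(\<Sum>i\<in>A. (norm (b i))\<^sup>2) = 1"
    and bg: "(\<Sum>i\<in>A. (norm (b i - g i))\<^sup>2) \<le> e\<^sup>2" and "0 \<le> e"
  shows "(\<Sum>i\<in>A. \<bar>(norm (b i))\<^sup>2 - (norm (g i))\<^sup>2 / (\<Sum>l\<in>A. (norm (g l))\<^sup>2)\<bar>) \<le> 6 * e"
proof (cases "e \<le> 1 / 3")
  case True
  define E where "E = L2_set (\<lambda>i. norm (b i - g i)) A"
  have "E \<le> e"
    using bg \<open>0 \<le> e\<close> unfolding E_def L2_set_def by (simp add: real_le_lsqrt)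
  have "L2_set (\<lambda>i. norm (b i)) A = 1"
    unfolding L2_set_def b1 by simp
  then have "(\<Sum>i\<in>A. \<bar>(norm (b i))\<^sup>2 - (norm (g i))\<^sup>2\<bar>) \<le> E * (2 + E)"
    using sum_abs_diff_norm_sq_le[of b g A] by (simp add: E_def)
  also have "\<dots> \<le> e * 3"
    using \<open>E \<le> e\<close> \<open>0 \<le> e\<close> True by (intro mult_mono) (auto simp: E_def)
  finally show ?thesis
    using sum_abs_diff_normalized_le[of A "\<lambda>i. (norm (b i))\<^sup>2" "\<lambda>i. (norm (g i))\<^sup>2"] \<open>finite A\<close> b1
    by simp
next
  case False
  then show ?thesis
    using sum_abs_diff_normalized_le_2[of A "\<lambda>i. (norm (b i))\<^sup>2" "\<lambda>i. (norm (g i))\<^sup>2"] \<open>finite A\<close> b1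
    by simp
qed

lemma idx'_eq_div: "0 < p \<Longrightarrow> idx' p q i = i * q div p"
proof -
  have "real q / real p * real i = real (i * q) / real p"
    by simp
  then show ?thesis
    unfolding idx'_def by (simp only: floor_divide_of_nat_eq nat_int)
qed

lemma rounding_intervals_disjoint:
  fixes p q :: nat
  assumes "0 < p" "p \<le> q"
  shows "disjoint_family_on (\<lambda>i. {i * q div p * p..<i * q}) I"
proof -
  have sep: "i * q \<le> j * q div p * p" if "i < j" for i j :: nat
  proof -
    have "i * q + q \<le> j * q"
      using that by (metis add.commute less_eq_Suc_le mult_Suc mult_le_mono1)
    moreover have "j * q < j * q div p * p + p"
      using div_mult_mod_eq[of "j * q" p] mod_less_divisor[OF \<open>0 < p\<close>, of "j * q"] by linarith
    ultimately show ?thesis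
      using \<open>p \<le> q\<close> by linarith
  qed
  show ?thesis
    unfolding disjoint_family_on_def
  proof (intro ballI impI)
    fix i j :: nat
    assume "i \<noteq> j"
    then consider "i < j" | "j < i"
      by linarith
    then show "{i * q div p * p..<i * q} \<inter> {j * q div p * p..<j * q} = {}"
      by cases (use sep[of i j] sep[of j i] in auto)
  qed
qed

lemma sum_abs_D_beta_minus_D_gamma_le:
  assumes "0 < p" "p \<le> q" and unit: "unit_superposition p \<alpha>"
  shows "(\<Sum>i<p. \<bar>D_beta p (FT p p \<alpha>) i - D_gamma p q (FT q p \<alpha>) i\<bar>) \<le> 12 * pi * sqrt (p / q)"
proof -
  define G where "G = FT (p * q) p \<alpha>"
  define b where "b i = of_real (sqrt q) * G (i * q)" for i
  \<comment> \<open>g rescales gamma_{i'} by sqrt (q / p), which the normalisation in D_gamma does not see\<close>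
  define g where "g i = of_real (sqrt q) * G (i * q div p * p)" for i
  have "0 < q"
    using assms by linarith
  have alpha_unit: "(\<Sum>i<p. (norm (\<alpha> i))\<^sup>2) = 1"
    using unit unfolding unit_superposition_def .
  have beta: "FT p p \<alpha> i = b i" for i
    unfolding b_def G_def by (rule FT_eq_refine[OF \<open>0 < q\<close>])
  have gamma: "FT q p \<alpha> c = of_real (sqrt p) * G (c * p)" for c
    using FT_eq_refine[OF \<open>0 < p\<close>, of q p \<alpha> c] unfolding G_def mult.commute[of q p] .
  have "D_gamma p q (FT q p \<alpha>) i = (norm (g i))\<^sup>2 / (\<Sum>l<p. (norm (g l))\<^sup>2)" for i
  proof -
    have scale: "(norm (FT q p \<alpha> (idx' p q l)))\<^sup>2 = p / q * (norm (g l))\<^sup>2" for l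
      using \<open>0 < q\<close> by (simp add: gamma g_def idx'_eq_div[OF \<open>0 < p\<close>] norm_mult power_mult_distrib)
    show ?thesis
      unfolding D_gamma_def scale sum_distrib_left[symmetric]
      using \<open>0 < p\<close> \<open>0 < q\<close> by (intro mult_divide_mult_cancel_left) simp
  qed
  moreover have "(\<Sum>i<p. (norm (b i))\<^sup>2) = 1"
    using sum_norm_FT_sq[of p p \<alpha>] alpha_unit by (simp flip: beta)
  moreover have "(\<Sum>i<p. (norm (b i - g i))\<^sup>2) \<le> (2 * pi * sqrt (p / q))\<^sup>2"
  proof -
    have "(\<Sum>i<p. (norm (b i - g i))\<^sup>2) = q * (\<Sum>i<p. (norm (G (i * q) - G (i * q div p * p)))\<^sup>2)"
      by (simp add: b_def g_def sum_distrib_left norm_mult power_mult_distrib flip: right_diff_distrib)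
    also have "\<dots> \<le> q * (p * (\<Sum>k<p * q. (norm (G (Suc k) - G k))\<^sup>2))"
    proof (intro mult_left_mono sum_norm_sq_telescoping_le rounding_intervals_disjoint assms)
      fix i assume "i \<in> {..<p}"
      have "i * q \<le> p * q"
        using \<open>i \<in> {..<p}\<close> by simp
      then show "i * q div p * p \<le> i * q \<and> i * q \<le> i * q div p * p + p \<and> i * q \<le> p * q"
        using div_mult_mod_eq[of "i * q" p] mod_less_divisor[OF \<open>0 < p\<close>, of "i * q"] by linarith
    qed auto
    also have "\<dots> \<le> q * (p * ((2 * pi * p / (p * q))\<^sup>2 * 1))"
      using sum_norm_FT_increment_sq_le[of p "p * q" \<alpha>] alpha_unit \<open>p \<le> q\<close> \<open>0 < q\<close>
      unfolding G_def by (intro mult_left_mono) auto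
    also have "\<dots> = (2 * pi * sqrt (p / q))\<^sup>2"
      using \<open>0 < p\<close> \<open>0 < q\<close> by (simp add: power2_eq_square field_simps)
    finally show ?thesis .
  qed
  ultimately show ?thesis
    using sum_abs_diff_normalized_norm_sq_le[of "{..<p}" b g "2 * pi * sqrt (p / q)"]
    by (simp add: D_beta_def beta)
qed

lemma sum_abs_D_beta_minus_D_gamma_le_inverse:
  assumes "0 < p" "p \<le> q" "0 < S" "2304 * S\<^sup>2 * p \<le> q" and unit: "unit_superposition p \<alpha>"
  shows "(\<Sum>i<p. \<bar>D_beta p (FT p p \<alpha>) i - D_gamma p q (FT q p \<alpha>) i\<bar>) \<le> 1 / S"
proof -
  have "real p / q \<le> (1 / (48 * S))\<^sup>2"
    using assms by (simp add: field_simps power2_eq_square)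
  then have "sqrt (p / q) \<le> 1 / (48 * S)"
    using \<open>0 < S\<close> by (simp add: real_le_lsqrt)
  then have "12 * pi * sqrt (p / q) \<le> 12 * 4 * (1 / (48 * S))"
    using pi_less_4 by (intro mult_mono) auto
  then show ?thesis
    using sum_abs_D_beta_minus_D_gamma_le[OF \<open>0 < p\<close> \<open>p \<le> q\<close> unit] \<open>0 < S\<close> by simp
qed

theorem theorem1:
  fixes p :: "nat \<Rightarrow> nat"
  assumes ppos: "\<forall>n. p n > 0"
    and pbound: "\<exists>k::nat. (\<lambda>n. real (p n)) \<in> O(\<lambda>n. 2 ^ (n ^ k))"
  shows "\<forall>s :: real poly. (\<forall>n::nat. poly s (real n) > 0) \<longrightarrow>
           (\<exists>t :: real poly. \<forall>(n::nat) (q::nat) (\<alpha>::nat \<Rightarrow> complex).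
              q > p n \<longrightarrow> real q \<ge> poly t (real n) * real (p n) \<longrightarrow>
              unit_superposition (p n) \<alpha> \<longrightarrow>
              (\<Sum>i<p n. \<bar>D_beta (p n) (FT (p n) (p n) \<alpha>) i
                         - D_gamma (p n) q (FT q (p n) \<alpha>) i\<bar>) \<le> 1 / poly s (real n))"
proof -
  have "(\<Sum>i<p n. \<bar>D_beta (p n) (FT (p n) (p n) \<alpha>) i - D_gamma (p n) q (FT q (p n) \<alpha>) i\<bar>)
          \<le> 1 / poly s (real n)"
    if "\<forall>n::nat. poly s (real n) > 0" "p n < q"
      and "poly (smult 2304 (s * s)) (real n) * real (p n) \<le> real q" "unit_superposition (p n) \<alpha>"
    for s :: "real poly" and n q \<alpha>
    using sum_abs_D_beta_minus_D_gamma_le_inverse[of "p n" q "poly s (real n)" \<alpha>] that ppos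
    by (simp add: power2_eq_square)
  then show ?thesis
    by blast
qed

end
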